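(* Let $d^{AD}_n$ denote the number of signed derangements $\sigma\in D_n$ with $\ell_D(\sigma)$ even. Then: (i) for $n\ge 2$, $d^{AD}_n=n!\sum_{k=0}^{n-2}\frac{2^{n-k-2}(-1)^k}{k!}+(-1)^{n-1}(n-1)$; (ii) for $n\ge 2$, $d^{AD}_n=2n\,d^{AD}_{n-1}+(-1)^{n-1}(n^2-2n-1)$, with $d^{AD}_1=0$; (iii) for $n\ge 3$, $d^{AD}_n=(2n-1)d^{AD}_{n-1}+2(n-1)d^{AD}_{n-2}+(-1)^{n-1}(2n-3)$, with $d^{AD}_1=0$, $d^{AD}_2=1$.
   Context: $B_n$ is the set of words $\sigma=\sigma_1\cdots\sigma_n$ with $\sigma_i\in\{\pm1,\dots,\pm n\}$ and $|\sigma_1|\cdots|\sigma_n|$ a permutation of $[n]$. $\mathrm{neg}(\sigma)=\#\{i:\sigma_i<0\}$. $D_n=\{\sigma\in B_n:\mathrm{neg}(\sigma)\text{ even}\}$. A derangement is an element with $\sigma_i\neq i$ for all $i$. $\mathrm{inv}(\sigma)=\#\{(i,j):i<j,\sigma_i>\sigma_j\}$ (usual integer order), $\ell_B(\sigma)=\mathrm{inv}(\sigma)-\sum_{i:\sigma_i<0}\sigma_i$, and $\ell_D(\sigma)=\ell_B(\sigma)-\mathrm{neg}(\sigma)$. *)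

theory Defs
  imports Complex_Main
begin

text \<open>Signed permutations of [n]: a word sigma_1 ... sigma_n is encoded as a function
  nat => int, with sigma i = 0 for i outside {1..n}.\<close>

definition signed_perms :: "nat \<Rightarrow> (nat \<Rightarrow> int) set" where
  "signed_perms n = {\<sigma>. (\<forall>i. i \<notin> {1..n} \<longrightarrow> \<sigma> i = 0) \<and>
      bij_betw (\<lambda>i. nat \<bar>\<sigma> i\<bar>) {1..n} {1..n}}"

definition negc :: "nat \<Rightarrow> (nat \<Rightarrow> int) \<Rightarrow> nat" where
  "negc n \<sigma> = card {i \<in> {1..n}. \<sigma> i < 0}"

definition even_signed_perms :: "nat \<Rightarrow> (nat \<Rightarrow> int) set" where
  "even_signed_perms n = {\<sigma> \<in> signed_perms n. even (negc n \<sigma>)}"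

definition is_derangement :: "nat \<Rightarrow> (nat \<Rightarrow> int) \<Rightarrow> bool" where
  "is_derangement n \<sigma> \<longleftrightarrow> (\<forall>i \<in> {1..n}. \<sigma> i \<noteq> int i)"

definition invc :: "nat \<Rightarrow> (nat \<Rightarrow> int) \<Rightarrow> nat" where
  "invc n \<sigma> = card {(i, j). i \<in> {1..n} \<and> j \<in> {1..n} \<and> i < j \<and> \<sigma> i > \<sigma> j}"

definition lenB :: "nat \<Rightarrow> (nat \<Rightarrow> int) \<Rightarrow> int" where
  "lenB n \<sigma> = int (invc n \<sigma>) - (\<Sum>i \<in> {i \<in> {1..n}. \<sigma> i < 0}. \<sigma> i)"

definition lenD :: "nat \<Rightarrow> (nat \<Rightarrow> int) \<Rightarrow> int" where
  "lenD n \<sigma> = lenB n \<sigma> - int (negc n \<sigma>)"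

definition dAD :: "nat \<Rightarrow> nat" where
  "dAD n = card {\<sigma> \<in> even_signed_perms n. is_derangement n \<sigma> \<and> even (lenD n \<sigma>)}"

end

theory Submission
  imports Defs "HOL-Combinatorics.Permutations"
begin

(* A signed permutation sigma of [n] is determined by the permutation pi = |sigma| and the set N
   of its negative positions. Writing nsp(sigma) = #{i < j. sigma_i + sigma_j < 0}, one has
   l_D(sigma) = inv(sigma) + nsp(sigma), and comparing the pair (i, j) in sigma and in |sigma| shows
   inv(sigma) + nsp(sigma) == inv(pi) (mod 2). So l_D(sigma) is even iff pi is an even permutation,
   and 4 d^AD_n counts the pairs (pi, N) for which pi has no fixed point outside N with weight
   (1 + (-1)^|N|) (1 + sign pi). Inclusion-exclusion over the fixed points of pi, together with
   sum_{pi in S_X} sign pi = [|X| <= 1], gives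
     4 d^AD_n = sum_k C(n,k) (-1)^k ((n-k)! + [n-k <= 1]) (2^(n-k) + 0^(n-k)),
   whose last two terms are 4 (-1)^(n-1) (n - 1); this is (i). *)

section \<open>Inversions and the sign of a permutation\<close>

definition ordered_pairs :: "'a::linorder set \<Rightarrow> ('a \<times> 'a) set" where
  "ordered_pairs A = {(i, j). i \<in> A \<and> j \<in> A \<and> i < j}"

definition inversions :: "'a::linorder set \<Rightarrow> ('a \<Rightarrow> 'b::linorder) \<Rightarrow> ('a \<times> 'a) set" where
  "inversions A f = {(i, j). i \<in> A \<and> j \<in> A \<and> i < j \<and> f i > f j}"

definition inversion_sign :: "'a::linorder set \<Rightarrow> ('a \<Rightarrow> 'b::linorder) \<Rightarrow> int" where
  "inversion_sign A f = (-1) ^ card (inversions A f)"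

lemma finite_ordered_pairs: "finite A \<Longrightarrow> finite (ordered_pairs A)"
  by (rule finite_subset[of _ "A \<times> A"]) (auto simp: ordered_pairs_def)

lemma prod_neg_one_if:
  "finite A \<Longrightarrow> (\<Prod>x\<in>A. if P x then -1 else 1) = ((-1::'b::comm_ring_1) ^ card {x \<in> A. P x})"
  by (simp add: prod.inter_filter[symmetric])

lemma inversion_sign_conv_prod:
  assumes "finite A"
  shows "inversion_sign A f = (\<Prod>(i, j)\<in>ordered_pairs A. if f j < f i then -1 else 1)"
proof -
  have "inversions A f = {p \<in> ordered_pairs A. f (snd p) < f (fst p)}"
    by (auto simp: inversions_def ordered_pairs_def)
  then show ?thesis
    by (simp add: inversion_sign_def case_prod_beta prod_neg_one_if finite_ordered_pairs[OF assms])
qed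

lemma bij_betw_ordered_pairs_permutes:
  assumes "finite A" "p permutes A"
  shows "bij_betw (\<lambda>(i, j). (min (p i) (p j), max (p i) (p j))) (ordered_pairs A) (ordered_pairs A)"
proof -
  let ?\<phi> = "\<lambda>(i, j). (min (p i) (p j), max (p i) (p j))"
  have inj: "inj_on p A" using assms(2) by (rule permutes_inj_on)
  have "p i \<noteq> p j" if "i \<in> A" "j \<in> A" "i \<noteq> j" for i j
    using inj that by (meson inj_on_contraD)
  then have into: "?\<phi> ` ordered_pairs A \<subseteq> ordered_pairs A"
    using assms(2) by (force simp: ordered_pairs_def min_def max_def permutes_in_image)
  have "inj_on ?\<phi> (ordered_pairs A)"
    unfolding inj_on_def ordered_pairs_def using inj
    by (auto simp: min_def max_def inj_on_eq_iff split: if_splits)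
  then show ?thesis
    using endo_inj_surj[OF finite_ordered_pairs[OF assms(1)] into] by (simp add: bij_betw_def)
qed

lemma inversion_sign_compose:
  assumes A: "finite A" and p: "p permutes A" and f: "inj_on f A"
  shows "inversion_sign A (f \<circ> p) = inversion_sign A f * inversion_sign A p"
proof -
  let ?\<phi> = "\<lambda>(i, j). (min (p i) (p j), max (p i) (p j))"
  define s where "s g = (\<lambda>(i, j). if g j < g i then -1 else (1::int))" for g :: "'a \<Rightarrow> 'b"
  define t where "t = (\<lambda>(i, j). if p j < p i then -1 else (1::int))"
  have pinj: "inj_on p A" using p by (rule permutes_inj_on)
  have "s (f \<circ> p) q = s f (?\<phi> q) * t q" if "q \<in> ordered_pairs A" for q
  proof -
    obtain i j where q: "q = (i, j)" by fastforce
    then have ij: "i \<in> A" "j \<in> A" "i < j" using that by (auto simp: ordered_pairs_def)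
    have "p i \<noteq> p j" using pinj ij by (metis inj_on_contraD less_irrefl)
    moreover have "f (p i) \<noteq> f (p j)"
      using f \<open>p i \<noteq> p j\<close> ij p by (metis inj_on_contraD permutes_in_image)
    ultimately show ?thesis
      using q by (auto simp: s_def t_def min_def max_def)
  qed
  then have "(\<Prod>q\<in>ordered_pairs A. s (f \<circ> p) q) = (\<Prod>q\<in>ordered_pairs A. s f (?\<phi> q)) * (\<Prod>q\<in>ordered_pairs A. t q)"
    by (simp add: prod.distrib)
  also have "(\<Prod>q\<in>ordered_pairs A. s f (?\<phi> q)) = (\<Prod>q\<in>ordered_pairs A. s f q)"
    using prod.reindex_bij_betw[OF bij_betw_ordered_pairs_permutes[OF A p]] by simp
  finally show ?thesis
    by (simp add: inversion_sign_conv_prod[OF A] s_def t_def case_prod_beta)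
qed

lemma inversion_sign_transpose:
  assumes "finite A" "a \<in> A" "b \<in> A" "a \<noteq> b"
  shows "inversion_sign A (transpose a b) = -1"
proof -
  have ordered: "inversion_sign A (transpose a b) = -1" if "a \<in> A" "b \<in> A" "a < b" for a b
  proof -
    let ?B = "{c \<in> A. a < c \<and> c < b}"
    have "inversions A (transpose a b) = insert (a, b) ((\<lambda>c. (a, c)) ` ?B \<union> (\<lambda>c. (c, b)) ` ?B)"
      using that by (auto simp: inversions_def transpose_def split: if_splits)
    moreover have "card ((\<lambda>c. (a, c)) ` ?B \<union> (\<lambda>c. (c, b)) ` ?B) = 2 * card ?B"
      using assms(1) by (subst card_Un_disjoint) (auto simp: card_image inj_on_def)
    ultimately have "card (inversions A (transpose a b)) = Suc (2 * card ?B)"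
      using assms(1) that by (auto simp: card_insert_if)
    then show ?thesis by (simp add: inversion_sign_def)
  qed
  show ?thesis
    using ordered assms(2-4) by (metis linorder_neqE transpose_commute)
qed

lemma inversion_sign_eq_sign:
  assumes "finite A" "p permutes A"
  shows "inversion_sign A p = sign p"
  using assms
proof (induction rule: permutes_rev_induct)
  case id
  have "inversions A id = {}" by (auto simp: inversions_def)
  then show ?case by (simp add: inversion_sign_def id_def)
next
  case (swap a b p)
  have "inversion_sign A (transpose a b) = -1"
    using swap.hyps assms(1) by (simp add: inversion_sign_transpose)
  moreover have "sign (transpose a b) = -1" using swap.hyps by (simp add: sign_swap_id)
  moreover have "inversion_sign A (p \<circ> transpose a b) = inversion_sign A p * inversion_sign A (transpose a b)"
    using swap assms(1) by (intro inversion_sign_compose permutes_inj_on) (simp_all add: permutes_swap_id)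
  moreover have "sign (p \<circ> transpose a b) = sign p * sign (transpose a b)"
    using swap assms(1) by (intro sign_compose permutation_swap_id permutes_imp_permutation)
  ultimately show ?case using swap.IH by (simp add: comp_def)
qed

lemma sum_sign_permutes:
  assumes "finite X"
  shows "(\<Sum>p | p permutes X. sign p) = (if card X \<le> 1 then 1 else (0::int))"
proof (cases "card X \<le> 1")
  case True
  then have "X = {} \<or> (\<exists>a. X = {a})"
    using assms by (metis card_0_eq card_1_singletonE le_Suc_eq le_zero_eq One_nat_def)
  then have "{p. p permutes X} = {id}" by auto
  then show ?thesis using True by simp
next
  case False
  obtain a b where ab: "a \<in> X" "b \<in> X" "a \<noteq> b"
    using False card_le_Suc0_iff_eq[OF assms] by auto
  have "(\<Sum>p | p permutes X. sign p) = (\<Sum>p | p permutes X. sign (p \<circ> transpose a b))"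
    by (rule sum_permutations_compose_right) (use ab in \<open>simp add: permutes_swap_id\<close>)
  also have "\<dots> = (\<Sum>p | p permutes X. - sign p)"
    using ab assms
    by (intro sum.cong refl) (simp add: sign_compose sign_swap_id permutes_imp_permutation permutation_swap_id)
  finally show ?thesis using False by (simp add: sum_negf)
qed

section \<open>Pairs with negative sum\<close>

definition neg_sum_pairs :: "'a::linorder set \<Rightarrow> ('a \<Rightarrow> int) \<Rightarrow> ('a \<times> 'a) set" where
  "neg_sum_pairs A \<sigma> = {(i, j). i \<in> A \<and> j \<in> A \<and> i < j \<and> \<sigma> i + \<sigma> j < 0}"

lemma inversion_sign_abs:
  fixes \<sigma> :: "'a::linorder \<Rightarrow> int"
  assumes A: "finite A" and inj: "inj_on (\<lambda>i. \<bar>\<sigma> i\<bar>) A"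
  shows "inversion_sign A (\<lambda>i. \<bar>\<sigma> i\<bar>)
       = inversion_sign A \<sigma> * (-1) ^ card (neg_sum_pairs A \<sigma>)"
proof -
  have "neg_sum_pairs A \<sigma> = {q \<in> ordered_pairs A. \<sigma> (fst q) + \<sigma> (snd q) < 0}"
    by (auto simp: neg_sum_pairs_def ordered_pairs_def)
  then have neg_sums: "(-1) ^ card (neg_sum_pairs A \<sigma>)
      = (\<Prod>(i, j)\<in>ordered_pairs A. if \<sigma> i + \<sigma> j < 0 then -1 else (1::int))"
    by (simp add: prod_neg_one_if finite_ordered_pairs[OF A] case_prod_beta)
  have pointwise: "(if \<bar>\<sigma> j\<bar> < \<bar>\<sigma> i\<bar> then -1 else 1)
      = (if \<sigma> j < \<sigma> i then -1 else 1) * (if \<sigma> i + \<sigma> j < 0 then -1 else (1::int))"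
    if "(i, j) \<in> ordered_pairs A" for i j
  proof -
    have "\<bar>\<sigma> i\<bar> \<noteq> \<bar>\<sigma> j\<bar>"
      using that inj_onD[OF inj, of i j] by (auto simp: ordered_pairs_def)
    then show ?thesis by (auto simp: abs_if)
  qed
  have "inversion_sign A (\<lambda>i. \<bar>\<sigma> i\<bar>) = (\<Prod>(i, j)\<in>ordered_pairs A.
      (if \<sigma> j < \<sigma> i then -1 else 1) * (if \<sigma> i + \<sigma> j < 0 then -1 else (1::int)))"
    unfolding inversion_sign_conv_prod[OF A] by (rule prod.cong[OF refl]) (clarify, rule pointwise)
  also have "\<dots> = inversion_sign A \<sigma> * (\<Prod>(i, j)\<in>ordered_pairs A. if \<sigma> i + \<sigma> j < 0 then -1 else (1::int))"
    unfolding inversion_sign_conv_prod[OF A] prod.distrib[symmetric] case_prod_beta ..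
  finally show ?thesis unfolding neg_sums .
qed

lemma card_neg_sum_pairs:
  fixes \<sigma> :: "'a::linorder \<Rightarrow> int"
  assumes A: "finite A" and inj: "inj_on (\<lambda>i. \<bar>\<sigma> i\<bar>) A"
  shows "card (neg_sum_pairs A \<sigma>)
       = (\<Sum>i | i \<in> A \<and> \<sigma> i < 0. card {j \<in> A. \<bar>\<sigma> j\<bar> < \<bar>\<sigma> i\<bar>})"
proof -
  let ?D = "SIGMA i:{i \<in> A. \<sigma> i < 0}. {j \<in> A. \<bar>\<sigma> j\<bar> < \<bar>\<sigma> i\<bar>}"
  let ?sort = "\<lambda>(i, j). (min i j, max i j)"
  have ne: "\<bar>\<sigma> i\<bar> \<noteq> \<bar>\<sigma> j\<bar>" if "i \<in> A" "j \<in> A" "i \<noteq> j" for i j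
    using inj that by (meson inj_onD)
  have "(i, j) \<in> ?sort ` ?D" if ij: "i \<in> A" "j \<in> A" "i < j" "\<sigma> i + \<sigma> j < 0" for i j
  proof (cases "\<bar>\<sigma> j\<bar> < \<bar>\<sigma> i\<bar>")
    case True
    then have "(i, j) \<in> ?D" using ij by (auto simp: abs_if split: if_splits)
    then show ?thesis using ij by (auto intro!: image_eqI[of _ _ "(i, j)"])
  next
    case False
    moreover have "\<bar>\<sigma> i\<bar> \<noteq> \<bar>\<sigma> j\<bar>" using ne ij by blast
    ultimately have "\<bar>\<sigma> i\<bar> < \<bar>\<sigma> j\<bar>" by (metis not_less order_le_neq_trans)
    then have "(j, i) \<in> ?D" using ij by (auto simp: abs_if split: if_splits)
    then show ?thesis using ij by (auto intro!: image_eqI[of _ _ "(j, i)"])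
  qed
  moreover have "(min i j, max i j) \<in> neg_sum_pairs A \<sigma>" if "(i, j) \<in> ?D" for i j
    using that by (cases i j rule: linorder_cases) (auto simp: neg_sum_pairs_def abs_if split: if_splits)
  ultimately have "neg_sum_pairs A \<sigma> = ?sort ` ?D"
    by (auto simp: neg_sum_pairs_def)
  also have "card \<dots> = card ?D"
    by (rule card_image) (auto simp: inj_on_def min_def max_def split: if_splits)
  also have "\<dots> = (\<Sum>i | i \<in> A \<and> \<sigma> i < 0. card {j \<in> A. \<bar>\<sigma> j\<bar> < \<bar>\<sigma> i\<bar>})"
    using A by (intro card_SigmaI) auto
  finally show ?thesis .
qed

section \<open>Signed permutations\<close>

lemma inj_on_abs_signed_perms:
  assumes "\<sigma> \<in> signed_perms n"
  shows "inj_on (\<lambda>i. \<bar>\<sigma> i\<bar>) {1..n}"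
proof (rule inj_onI)
  fix x y assume xy: "x \<in> {1..n}" "y \<in> {1..n}" "\<bar>\<sigma> x\<bar> = \<bar>\<sigma> y\<bar>"
  have "inj_on (\<lambda>i. nat \<bar>\<sigma> i\<bar>) {1..n}"
    using assms by (simp add: signed_perms_def bij_betw_def)
  then show "x = y" using inj_onD[of "\<lambda>i. nat \<bar>\<sigma> i\<bar>" "{1..n}" x y] xy by simp
qed

lemma card_bij_betw_less:
  assumes g: "bij_betw g A A"
  shows "card {j \<in> A. g j < v} = card {x \<in> A. x < v}"
proof -
  have "x \<in> g ` {j \<in> A. g j < v}" if "x \<in> A" "x < v" for x
  proof -
    from that(1) have "x \<in> g ` A" using g by (simp add: bij_betw_def)
    then obtain j where "j \<in> A" "x = g j" by blast
    then show ?thesis using that(2) by blast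
  qed
  then have "g ` {j \<in> A. g j < v} = {x \<in> A. x < v}"
    using bij_betw_apply[OF g] by auto
  moreover have "inj_on g {j \<in> A. g j < v}"
    using bij_betw_imp_inj_on[OF g] by (rule inj_on_subset) auto
  ultimately show ?thesis by (metis card_image)
qed

lemma lenD_eq_invc_plus_card_neg_sum_pairs:
  assumes \<sigma>: "\<sigma> \<in> signed_perms n"
  shows "lenD n \<sigma> = int (invc n \<sigma>) + int (card (neg_sum_pairs {1..n} \<sigma>))"
proof -
  let ?S = "{1..n}"
  let ?Neg = "{i \<in> ?S. \<sigma> i < 0}"
  define g where "g = (\<lambda>i. nat \<bar>\<sigma> i\<bar>)"
  have g: "bij_betw g ?S ?S" using \<sigma> by (simp add: signed_perms_def g_def)
  have gS: "g i \<in> ?S" if "i \<in> ?S" for i using bij_betw_apply[OF g that] .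
  have abs_eq: "\<bar>\<sigma> i\<bar> = int (g i)" for i by (simp add: g_def)
  have "card (neg_sum_pairs ?S \<sigma>) = (\<Sum>i\<in>?Neg. card {j \<in> ?S. g j < g i})"
    unfolding card_neg_sum_pairs[OF finite_atLeastAtMost inj_on_abs_signed_perms[OF \<sigma>]] abs_eq by simp
  also have "\<dots> = (\<Sum>i\<in>?Neg. g i - 1)"
  proof (rule sum.cong[OF refl])
    fix i assume "i \<in> ?Neg"
    then have "g i \<in> ?S" using gS by simp
    then have "{x \<in> ?S. x < g i} = {1..<g i}" by auto
    then show "card {j \<in> ?S. g j < g i} = g i - 1" using card_bij_betw_less[OF g, of "g i"] by simp
  qed
  also have "int \<dots> = (\<Sum>i\<in>?Neg. - \<sigma> i - 1)"
    unfolding of_nat_sum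
  proof (rule sum.cong[OF refl])
    fix i assume i: "i \<in> ?Neg"
    then have "g i \<ge> 1" using gS by simp
    then show "int (g i - 1) = - \<sigma> i - 1" using i abs_eq[of i] by simp
  qed
  finally show ?thesis
    by (simp add: lenD_def lenB_def negc_def sum_subtractf sum_negf)
qed

definition signed_perm :: "nat \<Rightarrow> (nat \<Rightarrow> nat) \<Rightarrow> nat set \<Rightarrow> nat \<Rightarrow> int" where
  "signed_perm n \<pi> N i = (if i \<in> {1..n} then if i \<in> N then - int (\<pi> i) else int (\<pi> i) else 0)"

lemma abs_signed_perm: "i \<in> {1..n} \<Longrightarrow> \<bar>signed_perm n \<pi> N i\<bar> = int (\<pi> i)"
  by (simp add: signed_perm_def)

lemma signed_perm_neg_iff:
  assumes "\<pi> permutes {1..n}" "i \<in> {1..n}"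
  shows "signed_perm n \<pi> N i < 0 \<longleftrightarrow> i \<in> N"
  using permutes_in_image[OF assms(1), of i] assms(2) by (auto simp: signed_perm_def)

lemma bij_betw_signed_perm:
  "bij_betw (\<lambda>(\<pi>, N). signed_perm n \<pi> N) ({\<pi>. \<pi> permutes {1..n}} \<times> Pow {1..n}) (signed_perms n)"
proof (rule bij_betw_imageI)
  let ?S = "{1..n}"
  show "inj_on (\<lambda>(\<pi>, N). signed_perm n \<pi> N) ({\<pi>. \<pi> permutes ?S} \<times> Pow ?S)"
  proof (rule inj_onI, clarify)
    fix \<pi> N \<pi>' N'
    assume p: "\<pi> permutes ?S" "\<pi>' permutes ?S" and N: "N \<subseteq> ?S" "N' \<subseteq> ?S"
      and eq: "signed_perm n \<pi> N = signed_perm n \<pi>' N'"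
    have "\<pi> i = \<pi>' i" for i
      using arg_cong[OF eq, of "\<lambda>\<sigma>. \<bar>\<sigma> i\<bar>"] permutes_not_in[OF p(1)] permutes_not_in[OF p(2)]
      by (cases "i \<in> ?S") (simp_all add: abs_signed_perm)
    moreover have "i \<in> N \<longleftrightarrow> i \<in> N'" if "i \<in> ?S" for i
      using arg_cong[OF eq, of "\<lambda>\<sigma>. \<sigma> i < 0"] signed_perm_neg_iff[OF p(1) that] signed_perm_neg_iff[OF p(2) that]
      by simp
    ultimately show "\<pi> = \<pi>' \<and> N = N'" using N by blast
  qed
  show "(\<lambda>(\<pi>, N). signed_perm n \<pi> N) ` ({\<pi>. \<pi> permutes ?S} \<times> Pow ?S) = signed_perms n"
  proof safe
    fix \<pi> N assume p: "\<pi> permutes ?S" and "N \<subseteq> ?S"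
    have "bij_betw (\<lambda>i. nat \<bar>signed_perm n \<pi> N i\<bar>) ?S ?S \<longleftrightarrow> bij_betw \<pi> ?S ?S"
      by (rule bij_betw_cong) (simp add: abs_signed_perm)
    with permutes_imp_bij[OF p] have "bij_betw (\<lambda>i. nat \<bar>signed_perm n \<pi> N i\<bar>) ?S ?S" by simp
    then show "signed_perm n \<pi> N \<in> signed_perms n"
      by (simp add: signed_perms_def signed_perm_def)
  next
    fix \<sigma> assume \<sigma>: "\<sigma> \<in> signed_perms n"
    define \<pi> where "\<pi> i = (if i \<in> ?S then nat \<bar>\<sigma> i\<bar> else i)" for i
    have "bij_betw \<pi> ?S ?S \<longleftrightarrow> bij_betw (\<lambda>i. nat \<bar>\<sigma> i\<bar>) ?S ?S"
      by (rule bij_betw_cong) (simp add: \<pi>_def)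
    then have "\<pi> permutes ?S"
      using \<sigma> by (intro bij_imp_permutes) (auto simp: signed_perms_def \<pi>_def)
    moreover have "\<sigma> = signed_perm n \<pi> {i \<in> ?S. \<sigma> i < 0}"
      using \<sigma> by (auto simp: fun_eq_iff signed_perm_def \<pi>_def signed_perms_def)
    ultimately show "\<sigma> \<in> (\<lambda>(\<pi>, N). signed_perm n \<pi> N) ` ({\<pi>. \<pi> permutes ?S} \<times> Pow ?S)"
      by (auto intro!: image_eqI[of _ _ "(\<pi>, {i \<in> ?S. \<sigma> i < 0})"])
  qed
qed

lemma negc_signed_perm:
  assumes "\<pi> permutes {1..n}" "N \<subseteq> {1..n}"
  shows "negc n (signed_perm n \<pi> N) = card N"
proof -
  have "{i \<in> {1..n}. signed_perm n \<pi> N i < 0} = N"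
    using assms signed_perm_neg_iff[OF assms(1)] by blast
  then show ?thesis by (simp add: negc_def)
qed

lemma is_derangement_signed_perm:
  "is_derangement n (signed_perm n \<pi> N) \<longleftrightarrow> (\<forall>i \<in> {1..n} - N. \<pi> i \<noteq> i)"
  by (auto simp: is_derangement_def signed_perm_def)

lemma even_lenD_signed_perm:
  assumes p: "\<pi> permutes {1..n}" and N: "N \<subseteq> {1..n}"
  shows "even (lenD n (signed_perm n \<pi> N)) \<longleftrightarrow> evenperm \<pi>"
proof -
  let ?S = "{1..n}"
  define \<sigma> where "\<sigma> = signed_perm n \<pi> N"
  have \<sigma>: "\<sigma> \<in> signed_perms n"
    using bij_betw_apply[OF bij_betw_signed_perm, of "(\<pi>, N)"] p N by (simp add: \<sigma>_def)
  have "inversions ?S (\<lambda>i. \<bar>\<sigma> i\<bar>) = inversions ?S \<pi>"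
    by (auto simp: inversions_def \<sigma>_def abs_signed_perm)
  then have "sign \<pi> = inversion_sign ?S \<sigma> * (-1) ^ card (neg_sum_pairs ?S \<sigma>)"
    using inversion_sign_abs[OF finite_atLeastAtMost inj_on_abs_signed_perms[OF \<sigma>]]
      inversion_sign_eq_sign[OF finite_atLeastAtMost p]
    by (simp add: inversion_sign_def)
  then have "sign \<pi> = (-1) ^ (invc n \<sigma> + card (neg_sum_pairs ?S \<sigma>))"
    by (simp add: inversion_sign_def invc_def inversions_def power_add)
  then have "evenperm \<pi> \<longleftrightarrow> even (invc n \<sigma> + card (neg_sum_pairs ?S \<sigma>))"
    by (simp add: sign_def minus_one_power_iff split: if_splits)
  then show ?thesis
    unfolding \<sigma>_def[symmetric] lenD_eq_invc_plus_card_neg_sum_pairs[OF \<sigma>]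
    by (metis even_of_nat of_nat_add)
qed

section \<open>Inclusion-exclusion over fixed points\<close>

lemma prod_of_bool:
  "finite A \<Longrightarrow> (\<Prod>x\<in>A. of_bool (P x)) = (of_bool (\<forall>x\<in>A. P x) :: 'b::comm_semiring_1)"
  by (induction rule: finite_induct) auto

lemma of_bool_ball_not_eq_sum_Pow:
  assumes "finite M"
  shows "(of_bool (\<forall>i\<in>M. \<not> Q i) :: 'b::comm_ring_1)
       = (\<Sum>K\<in>Pow M. (-1) ^ card K * of_bool (\<forall>i\<in>K. Q i))"
proof -
  have "(of_bool (\<forall>i\<in>M. \<not> Q i) :: 'b) = (\<Prod>i\<in>M. 1 - of_bool (Q i))"
    using assms by (simp add: prod_of_bool of_bool_not_iff[symmetric])
  also have "\<dots> = (\<Sum>K\<in>Pow M. (-1) ^ card K * (\<Prod>i\<in>K. of_bool (Q i)) * (\<Prod>i\<in>M - K. 1))"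
    by (rule prod_diff_conv_sum[OF assms])
  also have "\<dots> = (\<Sum>K\<in>Pow M. (-1) ^ card K * of_bool (\<forall>i\<in>K. Q i))"
    using assms by (intro sum.cong refl) (simp add: prod_of_bool finite_subset)
  finally show ?thesis .
qed

lemma sum_Pow_neg_one_power_card:
  "finite T \<Longrightarrow> (\<Sum>X\<in>Pow T. (-1) ^ card X) = (0::'b::comm_ring_1) ^ card T"
  using prod_diff_conv_sum[of T "\<lambda>_. 1::'b" "\<lambda>_. 1"] by simp

lemma sum_Pow_card:
  assumes "finite A"
  shows "(\<Sum>K\<in>Pow A. h (card K)) = (\<Sum>k=0..card A. of_nat (card A choose k) * h k)"
proof -
  have "(\<Sum>K\<in>Pow A. h (card K)) = (\<Sum>k=0..card A. \<Sum>K | K \<in> Pow A \<and> card K = k. h (card K))"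
    using assms by (intro sum.group[symmetric]) (auto simp: card_mono)
  also have "\<dots> = (\<Sum>k=0..card A. of_nat (card A choose k) * h k)"
    using n_subsets[OF assms] by (intro sum.cong refl) simp
  finally show ?thesis .
qed

lemma sum_permutes_fixing:
  assumes "finite S" "K \<subseteq> S"
  shows "(\<Sum>p | p permutes S. of_bool (\<forall>i\<in>K. p i = i) * (1 + sign p))
       = fact (card S - card K) + of_bool (card S - card K \<le> 1)"
proof -
  have "{p. p permutes S} \<inter> {p. \<forall>i\<in>K. p i = i} = {p. p permutes S - K}"
    using assms(2) by (auto simp: permutes_def)
  then have "(\<Sum>p | p permutes S. of_bool (\<forall>i\<in>K. p i = i) * (1 + sign p)) = (\<Sum>p | p permutes S - K. 1 + sign p)"
    using finite_permutations[OF assms(1)] by simp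
  also have "\<dots> = fact (card S - card K) + of_bool (card S - card K \<le> 1)"
    using assms by (simp add: sum.distrib card_permutations sum_sign_permutes card_Diff_subset finite_subset)
  finally show ?thesis .
qed

lemma sum_permutes_no_fixpoint_in:
  assumes "finite S" "M \<subseteq> S"
  shows "(\<Sum>p | p permutes S. of_bool (\<forall>i\<in>M. p i \<noteq> i) * (1 + sign p))
       = (\<Sum>K\<in>Pow M. (-1) ^ card K * (fact (card S - card K) + of_bool (card S - card K \<le> 1)))"
proof -
  have M: "finite M" using assms finite_subset by blast
  have "(\<Sum>p | p permutes S. of_bool (\<forall>i\<in>M. p i \<noteq> i) * (1 + sign p))
      = (\<Sum>p | p permutes S. \<Sum>K\<in>Pow M. (-1) ^ card K * (of_bool (\<forall>i\<in>K. p i = i) * (1 + sign p)))"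
    unfolding of_bool_ball_not_eq_sum_Pow[OF M] sum_distrib_right by (simp add: mult.assoc)
  also have "\<dots> = (\<Sum>K\<in>Pow M. (-1) ^ card K * (\<Sum>p | p permutes S. of_bool (\<forall>i\<in>K. p i = i) * (1 + sign p)))"
    unfolding sum_distrib_left by (rule sum.swap)
  also have "\<dots> = (\<Sum>K\<in>Pow M. (-1) ^ card K * (fact (card S - card K) + of_bool (card S - card K \<le> 1)))"
    using assms by (intro sum.cong refl) (subst sum_permutes_fixing, auto)
  finally show ?thesis .
qed

lemma four_dAD_eq_sum_permutes:
  "4 * int (dAD n) = (\<Sum>\<pi> | \<pi> permutes {1..n}. \<Sum>N\<in>Pow {1..n}.
      of_bool (\<forall>i\<in>{1..n} - N. \<pi> i \<noteq> i) * ((1 + (-1) ^ card N) * (1 + sign \<pi>)))"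
proof -
  let ?S = "{1..n}"
  let ?good = "\<lambda>\<sigma>. even (negc n \<sigma>) \<and> is_derangement n \<sigma> \<and> even (lenD n \<sigma>)"
  have "finite ({\<pi>. \<pi> permutes ?S} \<times> Pow ?S)"
    by (intro finite_cartesian_product finite_permutations) auto
  then have fin: "finite (signed_perms n)"
    using bij_betw_finite[OF bij_betw_signed_perm] by blast
  have "4 * int (dAD n) = (\<Sum>\<sigma>\<in>signed_perms n. 4 * of_bool (?good \<sigma>))"
    using fin by (simp add: dAD_def even_signed_perms_def sum_distrib_left[symmetric] Int_def)
  also have "\<dots> = (\<Sum>(\<pi>, N)\<in>{\<pi>. \<pi> permutes ?S} \<times> Pow ?S. 4 * of_bool (?good (signed_perm n \<pi> N)))"
    using sum.reindex_bij_betw[OF bij_betw_signed_perm[of n], of "\<lambda>\<sigma>. 4 * of_bool (?good \<sigma>) :: int"]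
    by (simp add: case_prod_beta')
  also have "\<dots> = (\<Sum>\<pi> | \<pi> permutes ?S. \<Sum>N\<in>Pow ?S. 4 * of_bool (?good (signed_perm n \<pi> N)))"
    by (rule sum.cartesian_product[symmetric])
  also have "\<dots> = (\<Sum>\<pi> | \<pi> permutes ?S. \<Sum>N\<in>Pow ?S.
      of_bool (\<forall>i\<in>?S - N. \<pi> i \<noteq> i) * ((1 + (-1) ^ card N) * (1 + sign \<pi>)))"
  proof (intro sum.cong refl)
    fix \<pi> N assume "\<pi> \<in> {\<pi>. \<pi> permutes ?S}" "N \<in> Pow ?S"
    then show "4 * of_bool (?good (signed_perm n \<pi> N))
        = of_bool (\<forall>i\<in>?S - N. \<pi> i \<noteq> i) * ((1 + (-1) ^ card N) * (1 + sign \<pi>))"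
      by (simp add: negc_signed_perm is_derangement_signed_perm even_lenD_signed_perm sign_def)
  qed
  finally show ?thesis .
qed

lemma four_dAD_eq_binomial_sum:
  "4 * int (dAD n) = (\<Sum>k=0..n. int (n choose k) * (-1) ^ k
      * (fact (n - k) + of_bool (n - k \<le> 1)) * (2 ^ (n - k) + 0 ^ (n - k)))"
proof -
  let ?S = "{1..n}"
  define w :: "nat \<Rightarrow> int" where "w m = fact m + of_bool (m \<le> 1)" for m
  have card_diff: "card (?S - K) = n - card K" if "K \<in> Pow ?S" for K
    using that by (simp add: card_Diff_subset finite_subset)
  have "4 * int (dAD n) = (\<Sum>N\<in>Pow ?S. (1 + (-1) ^ card N)
      * (\<Sum>\<pi> | \<pi> permutes ?S. of_bool (\<forall>i\<in>?S - N. \<pi> i \<noteq> i) * (1 + sign \<pi>)))"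
    unfolding four_dAD_eq_sum_permutes sum_distrib_left
    by (subst sum.swap) (simp add: algebra_simps)
  also have "\<dots> = (\<Sum>N\<in>Pow ?S. \<Sum>K\<in>Pow (?S - N). (1 + (-1) ^ card N) * ((-1) ^ card K * w (n - card K)))"
    by (intro sum.cong refl) (simp add: sum_permutes_no_fixpoint_in sum_distrib_left w_def)
  also have "\<dots> = (\<Sum>K\<in>Pow ?S. \<Sum>N\<in>Pow (?S - K). (1 + (-1) ^ card N) * ((-1) ^ card K * w (n - card K)))"
  proof -
    have "Pow (?S - A) = {B \<in> Pow ?S. A \<inter> B = {}}" for A by auto
    then show ?thesis
      using sum.swap_restrict[of "Pow ?S" "Pow ?S" "\<lambda>N K. (1 + (-1) ^ card N) * ((-1) ^ card K * w (n - card K))"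
          "\<lambda>N K. N \<inter> K = {}"]
      by (simp add: Int_commute)
  qed
  also have "\<dots> = (\<Sum>K\<in>Pow ?S. (-1) ^ card K * w (n - card K) * (2 ^ (n - card K) + 0 ^ (n - card K)))"
  proof (intro sum.cong refl)
    fix K assume K: "K \<in> Pow ?S"
    have "(\<Sum>N\<in>Pow (?S - K). 1 + (-1) ^ card N) = (2 ^ (n - card K) + 0 ^ (n - card K) :: int)"
      using card_diff[OF K] by (simp add: sum.distrib card_Pow sum_Pow_neg_one_power_card)
    then show "(\<Sum>N\<in>Pow (?S - K). (1 + (-1) ^ card N) * ((-1) ^ card K * w (n - card K)))
        = (-1) ^ card K * w (n - card K) * (2 ^ (n - card K) + 0 ^ (n - card K))"
      by (simp add: sum_distrib_right[symmetric] mult.commute)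
  qed
  also have "\<dots> = (\<Sum>k=0..n. int (n choose k) * (-1) ^ k
      * (fact (n - k) + of_bool (n - k \<le> 1)) * (2 ^ (n - k) + 0 ^ (n - k)))"
    using sum_Pow_card[of ?S "\<lambda>k. (-1) ^ k * w (n - k) * (2 ^ (n - k) + 0 ^ (n - k))"]
    by (simp add: w_def mult.assoc)
  finally show ?thesis .
qed

lemma dAD_closed_form:
  assumes "n \<ge> 2"
  shows "real (dAD n) = fact n * (\<Sum>k=0..n-2. 2 ^ (n - k - 2) * (-1) ^ k / fact k)
                        + (-1) ^ (n - 1) * (real n - 1)"
proof -
  obtain m where n: "n = m + 2" using assms by (metis add.commute le_Suc_ex)
  define T where "T k = real (n choose k) * (-1) ^ k * (fact (n - k) + of_bool (n - k \<le> 1))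
      * (2 ^ (n - k) + 0 ^ (n - k))" for k
  have "4 * real (dAD n) = (\<Sum>k=0..m+2. T k)"
    using arg_cong[OF four_dAD_eq_binomial_sum[of n], of real_of_int] by (simp add: T_def n)
  also have "\<dots> = (\<Sum>k=0..m. T k) + T (m + 1) + T (m + 2)"
    by (simp add: add.assoc)
  also have "(\<Sum>k=0..m. T k) = 4 * (fact n * (\<Sum>k=0..m. 2 ^ (m - k) * (-1) ^ k / fact k))"
    unfolding sum_distrib_left
  proof (intro sum.cong refl)
    fix k assume "k \<in> {0..m}"
    then have k: "k \<le> n" "\<not> n - k \<le> 1" and nk: "n - k = (m - k) + 2"
      using n by auto
    have pow2: "(2::real) ^ (n - k) = 4 * 2 ^ (m - k)"
      unfolding nk power_add by simp
    have "T k = (real (n choose k) * fact (n - k)) * (4 * (2 ^ (m - k) * (-1) ^ k))"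
      using k(2) pow2 by (simp add: T_def zero_power ac_simps)
    also have "real (n choose k) * fact (n - k) = fact n / fact k"
      using binomial_fact[OF k(1)] by (simp add: field_simps)
    finally show "T k = 4 * (fact n * (2 ^ (m - k) * (-1) ^ k / fact k))"
      by simp
  qed
  also have "T (m + 1) = 4 * real n * (-1) ^ (m + 1)" by (simp add: T_def n)
  also have "T (m + 2) = 4 * (-1) ^ m" by (simp add: T_def n)
  finally show ?thesis by (simp add: n algebra_simps)
qed

lemma dAD_1: "dAD 1 = 0"
  using four_dAD_eq_binomial_sum[of 1] by simp

lemma dAD_2: "dAD 2 = 1"
  using dAD_closed_form[of 2] by simp

lemma sum_pow2_alternating_Suc:
  "(\<Sum>k=0..Suc m. 2 ^ (Suc m - k) * (-1) ^ k / fact k :: real)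
     = 2 * (\<Sum>k=0..m. 2 ^ (m - k) * (-1) ^ k / fact k) + (-1) ^ Suc m / fact (Suc m)"
  by (simp add: sum_distrib_left Suc_diff_le mult.assoc)

lemma dAD_recurrence:
  assumes "n \<ge> 2"
  shows "int (dAD n) = 2 * int n * int (dAD (n - 1)) + (-1) ^ (n - 1) * (int n ^ 2 - 2 * int n - 1)"
proof (cases "n = 2")
  case True
  then show ?thesis by (simp add: dAD_2 dAD_1[unfolded One_nat_def])
next
  case False
  define m where "m = n - 3"
  have n: "n = m + 3" using assms False by (simp add: m_def)
  define s where "s = (\<Sum>k=0..m. 2 ^ (m - k) * (-1) ^ k / fact k :: real)"
  have fact3: "fact (m + 3) = (real m + 3) * (real m + 2) * (fact (m + 1) :: real)"
    by (simp add: numeral_3_eq_3 algebra_simps)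
  have fact2: "fact (m + 2) = (real m + 2) * (fact (m + 1) :: real)"
    by (simp add: numeral_2_eq_2 algebra_simps)
  have prev: "real (dAD (m + 2)) = fact (m + 2) * s + (-1) ^ (m + 1) * (real m + 1)"
    using dAD_closed_form[of "m + 2"] by (simp del: fact_Suc add: s_def)
  have "real (dAD (m + 3)) = fact (m + 3) * (2 * s + (-1) ^ (m + 1) / fact (m + 1)) + (-1) ^ m * (real m + 2)"
    using dAD_closed_form[of "m + 3"] sum_pow2_alternating_Suc[of m]
    by (simp del: fact_Suc add: s_def numeral_3_eq_3)
  also have "\<dots> = 2 * (real m + 3) * (fact (m + 2) * s) + (real m + 3) * (real m + 2) * (-1) ^ (m + 1)
      + (-1) ^ m * (real m + 2)"
    unfolding fact3 fact2 by (simp del: fact_Suc add: field_simps)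
  finally have cur: "real (dAD (m + 3)) = 2 * (real m + 3) * (fact (m + 2) * s)
      + (real m + 3) * (real m + 2) * (-1) ^ (m + 1) + (-1) ^ m * (real m + 2)" .
  have n1: "n - 1 = m + 2" using n by simp
  have "real (dAD n) = 2 * real n * real (dAD (n - 1)) + (-1) ^ (n - 1) * (real n ^ 2 - 2 * real n - 1)"
    unfolding n1 unfolding n cur prev by (simp del: fact_Suc add: algebra_simps power2_eq_square)
  then have "real_of_int (int (dAD n))
      = real_of_int (2 * int n * int (dAD (n - 1)) + (-1) ^ (n - 1) * (int n ^ 2 - 2 * int n - 1))"
    by simp
  then show ?thesis by (rule of_int_eq_iff[THEN iffD1])
qed

lemma dAD_second_order_recurrence:
  assumes "n \<ge> 3"
  shows "int (dAD n) = (2 * int n - 1) * int (dAD (n - 1)) + 2 * (int n - 1) * int (dAD (n - 2))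
      + (-1) ^ (n - 1) * (2 * int n - 3)"
proof -
  define m where "m = n - 3"
  have n: "n = m + 3" using assms by (simp add: m_def)
  show ?thesis
    using dAD_recurrence[of n] dAD_recurrence[of "n - 1"] assms
    by (simp add: n algebra_simps power2_eq_square)
qed

theorem theorem1p3:
  shows "(\<forall>n\<ge>2. real (dAD n) =
            fact n * (\<Sum>k=0..n-2. 2 ^ (n - k - 2) * (-1) ^ k / fact k)
            + (-1) ^ (n - 1) * (real n - 1))
       \<and> ((\<forall>n\<ge>2. int (dAD n) = 2 * int n * int (dAD (n - 1))
                 + (-1) ^ (n - 1) * (int n ^ 2 - 2 * int n - 1)) \<and> dAD 1 = 0)
       \<and> ((\<forall>n\<ge>3. int (dAD n) = (2 * int n - 1) * int (dAD (n - 1))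
                 + 2 * (int n - 1) * int (dAD (n - 2)) + (-1) ^ (n - 1) * (2 * int n - 3))
           \<and> dAD 1 = 0 \<and> dAD 2 = 1)"
  using dAD_closed_form dAD_recurrence dAD_second_order_recurrence dAD_1 dAD_2 by blast

end
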